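(* Let $M\ge1$, $h_1,\dots,h_M\ge0$, $P_{\rm peak}>0$, $\sigma^2>0$ and $\lambda,\beta\ge0$. Then the problem $\max_{0\le p\le P_{\rm peak},\ 0\le\alpha_m\le1\ (m=1,\dots,M)}\ \log\Big(1+\frac{\sum_{m=1}^M\alpha_m h_mp}{\sigma^2}\Big)+\sum_{m=1}^M\lambda(1-\alpha_m)h_mp-\beta p$ is equivalent to (in particular, has the same optimal value as) the problem $\max_{0\le\alpha\le1,\ 0\le p\le P_{\rm peak}}\ \log\Big(1+\frac{\alpha\sum_{m=1}^M h_mp}{\sigma^2}\Big)+(1-\alpha)\sum_{m=1}^M\lambda h_mp-\beta p.$
   Context: Here $h_m$ is the channel power gain to receive antenna $m$, $\alpha_m$ is the power splitting ratio at antenna $m$, $p$ the transmit power, and $\log$ is the natural logarithm. *)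

theory Defs
  imports "HOL-Analysis.Analysis"
begin

definition obj1 :: "nat \<Rightarrow> (nat \<Rightarrow> real) \<Rightarrow> real \<Rightarrow> real \<Rightarrow> real \<Rightarrow> (nat \<Rightarrow> real) \<Rightarrow> real \<Rightarrow> real" where
  "obj1 M h sig2 lam beta a p =
     ln (1 + (\<Sum>m=1..M. a m * h m * p) / sig2) + (\<Sum>m=1..M. lam * (1 - a m) * h m * p) - beta * p"

definition obj2 :: "nat \<Rightarrow> (nat \<Rightarrow> real) \<Rightarrow> real \<Rightarrow> real \<Rightarrow> real \<Rightarrow> real \<Rightarrow> real \<Rightarrow> real" where
  "obj2 M h sig2 lam beta al p =
     ln (1 + al * (\<Sum>m=1..M. h m * p) / sig2) + (1 - al) * (\<Sum>m=1..M. lam * h m * p) - beta * p"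

end

theory Submission
  imports Defs
begin

text \<open>Both objectives depend on the splitting ratios only through the harvested gain
  \<open>\<Sum>\<^sub>m \<alpha>\<^sub>m h\<^sub>m\<close>, which with per-antenna ratios ranges exactly over the interval
  \<open>[0, \<Sum>\<^sub>m h\<^sub>m]\<close>; a common ratio \<open>\<alpha>\<close> sweeps the same interval as \<open>\<alpha> \<Sum>\<^sub>m h\<^sub>m\<close>.
  Hence the two problems have the same set of attainable objective values.\<close>

definition obj_gain :: "real \<Rightarrow> real \<Rightarrow> real \<Rightarrow> real \<Rightarrow> real \<Rightarrow> real \<Rightarrow> real" where
  "obj_gain sig2 lam beta S T p = ln (1 + T * p / sig2) + lam * p * (S - T) - beta * p"

lemma obj1_eq_obj_gain:
  "obj1 M h sig2 lam beta a p
     = obj_gain sig2 lam beta (\<Sum>m=1..M. h m) (\<Sum>m=1..M. a m * h m) p"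
proof -
  have "(\<Sum>m=1..M. a m * h m * p) = (\<Sum>m=1..M. a m * h m) * p"
    by (simp add: sum_distrib_right)
  moreover have "(\<Sum>m=1..M. lam * (1 - a m) * h m * p)
      = lam * p * ((\<Sum>m=1..M. h m) - (\<Sum>m=1..M. a m * h m))"
    by (simp add: sum_distrib_left sum_subtractf[symmetric] algebra_simps)
  ultimately show ?thesis
    unfolding obj1_def obj_gain_def by simp
qed

lemma obj2_eq_obj_gain:
  "obj2 M h sig2 lam beta al p
     = obj_gain sig2 lam beta (\<Sum>m=1..M. h m) (al * (\<Sum>m=1..M. h m)) p"
proof -
  have "(\<Sum>m=1..M. h m * p) = (\<Sum>m=1..M. h m) * p"
    by (simp add: sum_distrib_right)
  moreover have "(\<Sum>m=1..M. lam * h m * p) = lam * p * (\<Sum>m=1..M. h m)"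
    by (simp add: sum_distrib_left mult_ac)
  ultimately show ?thesis
    unfolding obj2_def obj_gain_def by (simp add: algebra_simps)
qed

lemma weighted_sum_bounds:
  fixes h a :: "'i \<Rightarrow> real"
  assumes "\<forall>m\<in>I. 0 \<le> h m" and "\<forall>m\<in>I. 0 \<le> a m \<and> a m \<le> 1"
  shows "0 \<le> (\<Sum>m\<in>I. a m * h m)" and "(\<Sum>m\<in>I. a m * h m) \<le> (\<Sum>m\<in>I. h m)"
  using assms by (auto intro!: sum_nonneg sum_mono intro: mult_left_le_one_le)

lemma ex_ratio_between:
  fixes T S :: real
  assumes "0 \<le> T" and "T \<le> S"
  obtains al where "0 \<le> al" "al \<le> 1" "T = al * S"
proof (cases "S = 0")
  case True
  with assms show ?thesis by (intro that[of 0]) auto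
next
  case False
  with assms show ?thesis by (intro that[of "T / S"]) auto
qed

lemma image_weighted_gain:
  fixes h :: "'i \<Rightarrow> real" and P :: "'b \<Rightarrow> bool"
  assumes "\<forall>m\<in>I. 0 \<le> h m"
  shows "(\<lambda>(a, p). (\<Sum>m\<in>I. a m * h m, p)) ` {(a, p). P p \<and> (\<forall>m\<in>I. 0 \<le> a m \<and> a m \<le> 1)}
       = {(T, p). 0 \<le> T \<and> T \<le> (\<Sum>m\<in>I. h m) \<and> P p}"
    (is "?g ` ?A = ?G")
proof (intro equalityI subsetI)
  fix x assume "x \<in> ?G"
  then obtain T p where x: "x = (T, p)" "0 \<le> T" "T \<le> (\<Sum>m\<in>I. h m)" "P p" by auto
  then obtain al where "0 \<le> al" "al \<le> 1" "T = al * (\<Sum>m\<in>I. h m)"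
    by (blast elim: ex_ratio_between)
  with x show "x \<in> ?g ` ?A"
    by (intro image_eqI[of _ _ "(\<lambda>_. al, p)"]) (auto simp: sum_distrib_left)
qed (use weighted_sum_bounds[OF assms] in auto)

lemma image_scaled_gain:
  fixes S :: real and P :: "'b \<Rightarrow> bool"
  assumes "0 \<le> S"
  shows "(\<lambda>(al, p). (al * S, p)) ` {(al, p). 0 \<le> al \<and> al \<le> 1 \<and> P p}
       = {(T, p). 0 \<le> T \<and> T \<le> S \<and> P p}"
    (is "?g ` ?B = ?G")
proof (intro equalityI subsetI)
  fix x assume "x \<in> ?G"
  then obtain T p where x: "x = (T, p)" "0 \<le> T" "T \<le> S" "P p" by auto
  then obtain al where "0 \<le> al" "al \<le> 1" "T = al * S" by (blast elim: ex_ratio_between)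
  with x show "x \<in> ?g ` ?B"
    by (intro image_eqI[of _ _ "(al, p)"]) auto
qed (use assms in \<open>auto intro: mult_left_le_one_le\<close>)

theorem lemma5p2:
  fixes M :: nat and h :: "nat \<Rightarrow> real" and Ppeak sig2 lam beta :: real
  assumes "M \<ge> 1" and "\<forall>m\<in>{1..M}. h m \<ge> 0" and "Ppeak > 0" and "sig2 > 0"
    and "lam \<ge> 0" and "beta \<ge> 0"
  shows "(SUP (a, p) \<in> {(a, p). 0 \<le> p \<and> p \<le> Ppeak \<and> (\<forall>m\<in>{1..M}. 0 \<le> a m \<and> a m \<le> 1)}.
            obj1 M h sig2 lam beta a p)
       = (SUP (al, p) \<in> {(al, p). 0 \<le> al \<and> al \<le> 1 \<and> 0 \<le> p \<and> p \<le> Ppeak}.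
            obj2 M h sig2 lam beta al p)"
proof -
  let ?S = "\<Sum>m=1..M. h m"
  let ?F = "\<lambda>(T, p). obj_gain sig2 lam beta ?S T p"
  let ?P = "\<lambda>p. 0 \<le> p \<and> p \<le> Ppeak"
  have gains_agree:
    "(\<lambda>(a, p). (\<Sum>m=1..M. a m * h m, p)) ` {(a, p). ?P p \<and> (\<forall>m\<in>{1..M}. 0 \<le> a m \<and> a m \<le> 1)}
     = (\<lambda>(al, p). (al * ?S, p)) ` {(al, p). 0 \<le> al \<and> al \<le> 1 \<and> ?P p}"
    using image_weighted_gain[OF assms(2), of ?P] image_scaled_gain[of ?S ?P]
      sum_nonneg[of "{1..M}" h] assms(2) by simp
  have "(\<lambda>(a, p). obj1 M h sig2 lam beta a p) ` {(a, p). ?P p \<and> (\<forall>m\<in>{1..M}. 0 \<le> a m \<and> a m \<le> 1)}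
      = (\<lambda>(al, p). obj2 M h sig2 lam beta al p) ` {(al, p). 0 \<le> al \<and> al \<le> 1 \<and> ?P p}"
    using arg_cong[OF gains_agree, of "image ?F"]
    by (simp add: image_image obj1_eq_obj_gain obj2_eq_obj_gain case_prod_beta)
  then show ?thesis
    by (simp add: conj_assoc)
qed

end
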